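(* Let $M=\langle n_1,n_2,n_3\rangle$ be a numerical monoid of embedding dimension three with minimal generators $n_1<n_2<n_3$ and exactly three Betti elements, and let $(r_{ij})$ be its associated 0-matrix. Then: (1) $L(x+n_1)=L(x)+1$ holds for all $x\in M$ if and only if $r_{12}+r_{32}\leq r_{21}+r_{23}$; (2) $\ell(x+n_3)=\ell(x)+1$ holds for all $x\in M$ if and only if $r_{12}+r_{32}\geq r_{21}+r_{23}$.
   Context: $\mathbb{N}$ denotes the nonnegative integers. A numerical monoid is a submonoid of $\mathbb{N}$ with finite complement. For $x\in M$, $\mathsf{Z}(x)=\{(a_1,a_2,a_3)\in\mathbb{N}^3\mid a_1n_1+a_2n_2+a_3n_3=x\}$; $L(x)$, $\ell(x)$ are the maximum and minimum of $a_1+a_2+a_3$ over $\mathsf{Z}(x)$. The graph $\nabla_x$ has vertex set $\mathsf{Z}(x)$, distinct $v,v'$ adjacent iff $v\cdot v'\neq0$; $x$ is a Betti element if $\nabla_x$ is disconnected. For $i=1,2,3$, $c_i=\min\{k\geq1\mid\exists(a_1,a_2,a_3)\in\mathsf{Z}(kn_i),\ a_i=0\}$. The associated 0-matrix of $M$ is $\begin{pmatrix}0&r_{12}&r_{13}\\ r_{21}&0&r_{23}\\ r_{31}&r_{32}&0\end{pmatrix}$ where $r_{ij}\in\mathbb{N}$ satisfy $c_1n_1=r_{12}n_2+r_{13}n_3$, $c_2n_2=r_{21}n_1+r_{23}n_3$, $c_3n_3=r_{31}n_1+r_{32}n_2$ (these are uniquely determined, and positive, when $M$ has three Betti elements). 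*)

theory Defs
  imports Main
begin

type_synonym fact3 = "nat \<times> nat \<times> nat"

definition Z :: "nat \<Rightarrow> nat \<Rightarrow> nat \<Rightarrow> nat \<Rightarrow> fact3 set" where
  "Z n1 n2 n3 x = {(a1, a2, a3). a1 * n1 + a2 * n2 + a3 * n3 = x}"

definition gen_monoid :: "nat \<Rightarrow> nat \<Rightarrow> nat \<Rightarrow> nat set" where
  "gen_monoid n1 n2 n3 = {x. Z n1 n2 n3 x \<noteq> {}}"

definition emb_dim3 :: "nat \<Rightarrow> nat \<Rightarrow> nat \<Rightarrow> bool" where
  "emb_dim3 n1 n2 n3 \<longleftrightarrow> 0 < n1 \<and> n1 < n2 \<and> n2 < n3
     \<and> finite (UNIV - gen_monoid n1 n2 n3)
     \<and> n1 \<notin> {a * n2 + b * n3 | a b. True}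
     \<and> n2 \<notin> {a * n1 + b * n3 | a b. True}
     \<and> n3 \<notin> {a * n1 + b * n2 | a b. True}"

definition flen :: "fact3 \<Rightarrow> nat" where
  "flen v = (case v of (a1, a2, a3) \<Rightarrow> a1 + a2 + a3)"

definition maxlen :: "nat \<Rightarrow> nat \<Rightarrow> nat \<Rightarrow> nat \<Rightarrow> nat" where
  "maxlen n1 n2 n3 x = Max (flen ` Z n1 n2 n3 x)"

definition minlen :: "nat \<Rightarrow> nat \<Rightarrow> nat \<Rightarrow> nat \<Rightarrow> nat" where
  "minlen n1 n2 n3 x = Min (flen ` Z n1 n2 n3 x)"

definition fdot :: "fact3 \<Rightarrow> fact3 \<Rightarrow> nat" where
  "fdot v w = (case v of (a1, a2, a3) \<Rightarrow> case w of (b1, b2, b3) \<Rightarrow>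
      a1 * b1 + a2 * b2 + a3 * b3)"

definition nabla_edge :: "nat \<Rightarrow> nat \<Rightarrow> nat \<Rightarrow> nat \<Rightarrow> fact3 \<Rightarrow> fact3 \<Rightarrow> bool" where
  "nabla_edge n1 n2 n3 x v w \<longleftrightarrow>
     v \<in> Z n1 n2 n3 x \<and> w \<in> Z n1 n2 n3 x \<and> v \<noteq> w \<and> fdot v w \<noteq> 0"

definition betti :: "nat \<Rightarrow> nat \<Rightarrow> nat \<Rightarrow> nat \<Rightarrow> bool" where
  "betti n1 n2 n3 x \<longleftrightarrow> x \<in> gen_monoid n1 n2 n3 \<and>
     \<not> (\<forall>v \<in> Z n1 n2 n3 x. \<forall>w \<in> Z n1 n2 n3 x. (nabla_edge n1 n2 n3 x)\<^sup>*\<^sup>* v w)"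

definition fcomp :: "nat \<Rightarrow> fact3 \<Rightarrow> nat" where
  "fcomp i v = (case v of (a1, a2, a3) \<Rightarrow> if i = 1 then a1 else if i = 2 then a2 else a3)"

definition gen :: "nat \<Rightarrow> nat \<Rightarrow> nat \<Rightarrow> nat \<Rightarrow> nat" where
  "gen n1 n2 n3 i = (if i = 1 then n1 else if i = 2 then n2 else n3)"

definition cc :: "nat \<Rightarrow> nat \<Rightarrow> nat \<Rightarrow> nat \<Rightarrow> nat" where
  "cc n1 n2 n3 i = (LEAST k. 1 \<le> k \<and>
      (\<exists>v \<in> Z n1 n2 n3 (k * gen n1 n2 n3 i). fcomp i v = 0))"

end

theory Submission
  imports Defs
begin

text \<open>
  Three Betti elements force the elements c_i n_i to be pairwise distinct. Going round the
  cycle of minimal relations then gives Herzog's description of the 0-matrix: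
  0 < r_ij < c_j and c_j = r_ij + r_kj, in particular c_2 = r_12 + r_32.

  If y - n_1 lies in M, a factorization of y not involving n_1 admits one of the three
  minimal relations, and applying it yields a factorization involving n_1. Since
  n_1 < n_2 < n_3, the relations of c_1 n_1 and c_3 n_3 never shorten a factorization, and
  the one of c_2 n_2 does not shorten it iff c_2 \<le> r_21 + r_23; in that case L(x + n_1) =
  L(x) + 1. Conversely, the factorizations of c_2 n_2 are just (0, c_2, 0) and
  (r_21, 0, r_23), so x = c_2 n_2 - n_1 has L(x) + 1 = r_21 + r_23 while
  L(x + n_1) \<ge> c_2. The statement for minimal lengths and n_3 is the mirror image.
\<close>

lemma mem_Z_iff [simp]: "(a, b, c) \<in> Z n1 n2 n3 x \<longleftrightarrow> a * n1 + b * n2 + c * n3 = x"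
  by (simp add: Z_def)

lemma flen_eq [simp]: "flen (a, b, c) = a + b + c"
  by (simp add: flen_def)

lemma fdot_eq [simp]: "fdot (a, b, c) (a', b', c') = a * a' + b * b' + c * c'"
  by (simp add: fdot_def)

lemma gen_monoidI: "v \<in> Z n1 n2 n3 x \<Longrightarrow> x \<in> gen_monoid n1 n2 n3"
  unfolding gen_monoid_def by blast

lemma gen_monoidE:
  assumes "x \<in> gen_monoid n1 n2 n3"
  obtains a b c where "a * n1 + b * n2 + c * n3 = x"
proof -
  from assms obtain v where "v \<in> Z n1 n2 n3 x"
    by (auto simp: gen_monoid_def)
  then show thesis
    using that by (cases v) simp
qed

lemma finite_Z:
  assumes "0 < n1" "0 < n2" "0 < n3"
  shows "finite (Z n1 n2 n3 x)"
proof -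
  have "a \<le> x \<and> b \<le> x \<and> c \<le> x" if "(a, b, c) \<in> Z n1 n2 n3 x" for a b c
  proof -
    have "a * 1 \<le> a * n1" "b * 1 \<le> b * n2" "c * 1 \<le> c * n3"
      using assms by (intro mult_le_mono2; simp)+
    moreover have "a * n1 + b * n2 + c * n3 = x" using that by simp
    ultimately show ?thesis by linarith
  qed
  then have "Z n1 n2 n3 x \<subseteq> {..x} \<times> {..x} \<times> {..x}" by auto
  then show ?thesis by (rule finite_subset) simp
qed

context
  fixes n1 n2 n3 :: nat
  assumes pos: "0 < n1" "0 < n2" "0 < n3"
begin

lemma maxlen_ge: "v \<in> Z n1 n2 n3 x \<Longrightarrow> flen v \<le> maxlen n1 n2 n3 x"
  unfolding maxlen_def using finite_Z[OF pos] by simp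

lemma minlen_le: "v \<in> Z n1 n2 n3 x \<Longrightarrow> minlen n1 n2 n3 x \<le> flen v"
  unfolding minlen_def using finite_Z[OF pos] by simp

lemma maxlen_attained:
  assumes "x \<in> gen_monoid n1 n2 n3"
  obtains v where "v \<in> Z n1 n2 n3 x" "flen v = maxlen n1 n2 n3 x"
proof -
  have "maxlen n1 n2 n3 x \<in> flen ` Z n1 n2 n3 x"
    unfolding maxlen_def using finite_Z[OF pos] assms by (simp add: gen_monoid_def)
  then show ?thesis using that by auto
qed

lemma minlen_attained:
  assumes "x \<in> gen_monoid n1 n2 n3"
  obtains v where "v \<in> Z n1 n2 n3 x" "flen v = minlen n1 n2 n3 x"
proof -
  have "minlen n1 n2 n3 x \<in> flen ` Z n1 n2 n3 x"
    unfolding minlen_def using finite_Z[OF pos] assms by (simp add: gen_monoid_def)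
  then show ?thesis using that by auto
qed

lemma cc_pos: "0 < cc n1 n2 n3 i"
proof -
  let ?P = "\<lambda>k. 1 \<le> k \<and> (\<exists>v \<in> Z n1 n2 n3 (k * gen n1 n2 n3 i). fcomp i v = 0)"
  have "?P (if i = 1 then n2 else n1)"
  proof (cases "i = 1")
    case True
    then show ?thesis
      using pos by (auto simp: gen_def fcomp_def intro!: bexI[of _ "(0, n1, 0)"])
  next
    case False
    then show ?thesis
      using pos by (auto simp: gen_def fcomp_def intro!: bexI[of _ "(gen n1 n2 n3 i, 0, 0)"])
  qed
  then have "?P (cc n1 n2 n3 i)"
    unfolding cc_def by (rule LeastI)
  then show ?thesis by simp
qed

end

lemma cc_le:
  "0 < k \<Longrightarrow> v \<in> Z n1 n2 n3 (k * gen n1 n2 n3 i) \<Longrightarrow> fcomp i v = 0 \<Longrightarrow> cc n1 n2 n3 i \<le> k"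
  unfolding cc_def by (rule Least_le) auto

definition bounds_span_multiples :: "nat \<Rightarrow> nat \<Rightarrow> nat \<Rightarrow> nat \<Rightarrow> bool" where
  "bounds_span_multiples c x y z \<longleftrightarrow> (\<forall>k a b. 0 < k \<longrightarrow> k * x = a * y + b * z \<longrightarrow> c \<le> k)"

lemma bounds_span_multiples_commute:
  "bounds_span_multiples c x y z \<longleftrightarrow> bounds_span_multiples c x z y"
  unfolding bounds_span_multiples_def by (metis add.commute)

lemma bounds_span_multiplesD:
  "bounds_span_multiples c x y z \<Longrightarrow> k * x = a * y + b * z \<Longrightarrow> 0 < k \<Longrightarrow> c \<le> k"
  unfolding bounds_span_multiples_def by blast

lemma bounds_span_multiples_cc:
  "bounds_span_multiples (cc n1 n2 n3 1) n1 n2 n3"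
  "bounds_span_multiples (cc n1 n2 n3 2) n2 n1 n3"
  "bounds_span_multiples (cc n1 n2 n3 3) n3 n1 n2"
  unfolding bounds_span_multiples_def
  by (auto simp: gen_def fcomp_def intro: cc_le[where v = "(0, a, b)" for a b]
      cc_le[where v = "(a, 0, b)" for a b] cc_le[where v = "(a, b, 0)" for a b])

lemma span_coeff_le:
  assumes eq: "k * x + p * y + q * z = a * y + b * z" and "b < c" "0 < y" "0 < z"
    and least: "bounds_span_multiples c z x y"
  shows "p \<le> a"
proof (rule ccontr)
  assume "\<not> p \<le> a"
  then obtain d where d: "p = a + d" "0 < d"
    by (metis less_imp_add_positive not_le)
  then have eq': "k * x + d * y + q * z = b * z"
    using eq by (simp add: algebra_simps)
  then have "q * z \<le> b * z" by linarith
  then have "q \<le> b"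
    using \<open>0 < z\<close> by simp
  then obtain e where e: "b = q + e"
    by (auto simp: le_iff_add)
  then have "e * z = k * x + d * y"
    using eq' by (simp add: algebra_simps)
  moreover have "0 < e"
    using calculation d \<open>0 < y\<close> by (metis add_is_0 mult_is_0 neq0_conv)
  ultimately have "c \<le> e"
    by (rule bounds_span_multiplesD[OF least])
  with e \<open>b < c\<close> show False by simp
qed

definition two_nonzero :: "fact3 \<Rightarrow> bool" where
  "two_nonzero v \<longleftrightarrow>
     (case v of (a, b, c) \<Rightarrow> (0 < a \<and> 0 < b) \<or> (0 < a \<and> 0 < c) \<or> (0 < b \<and> 0 < c))"

lemma fdot_commute: "fdot v w = fdot w v"
  by (cases v; cases w) (simp add: mult.commute)

lemma fdot_ne_0_if_two_nonzero: "two_nonzero v \<Longrightarrow> two_nonzero w \<Longrightarrow> fdot v w \<noteq> 0"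
  by (cases v; cases w) (auto simp: two_nonzero_def)

lemma nabla_reach_if_fdot:
  assumes "v \<in> Z n1 n2 n3 x" "w \<in> Z n1 n2 n3 x" "fdot v w \<noteq> 0"
  shows "(nabla_edge n1 n2 n3 x)\<^sup>*\<^sup>* v w"
proof (cases "v = w")
  case False
  with assms have "nabla_edge n1 n2 n3 x v w"
    by (simp add: nabla_edge_def)
  then show ?thesis by simp
qed simp

lemma multiple_exceeding_relation:
  assumes "a * x = b * y + d * z" "0 < a" "a \<noteq> c" "0 < x" "0 < c"
    and rel: "c * x = p * y + q * z" and least: "bounds_span_multiples c x y z"
  shows "c < a" "(a - c) * x + p * y + q * z = a * x" "0 < p \<or> 0 < q"
proof -
  show "c < a"
    using bounds_span_multiplesD[OF least assms(1,2)] \<open>a \<noteq> c\<close> by simp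
  then show "(a - c) * x + p * y + q * z = a * x"
    by (metis rel add.assoc le_add_diff_inverse2 less_imp_le_nat add_mult_distrib)
  show "0 < p \<or> 0 < q"
    using rel \<open>0 < x\<close> \<open>0 < c\<close> by (metis add_0 mult_0 mult_is_0 neq0_conv)
qed

locale minimal_relations =
  fixes n1 n2 n3 c1 c2 c3 r12 r13 r21 r23 r31 r32 :: nat
  assumes gens_pos: "0 < n1" "0 < n2" "0 < n3"
    and c_pos: "0 < c1" "0 < c2" "0 < c3"
    and rel1: "c1 * n1 = r12 * n2 + r13 * n3"
    and rel2: "c2 * n2 = r21 * n1 + r23 * n3"
    and rel3: "c3 * n3 = r31 * n1 + r32 * n2"
    and least1: "bounds_span_multiples c1 n1 n2 n3"
    and least2: "bounds_span_multiples c2 n2 n1 n3"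
    and least3: "bounds_span_multiples c3 n3 n1 n2"
begin

lemma exchange_applies:
  assumes eq: "k * n1 + p * n2 + q * n3 = a * n2 + b * n3" and "0 < k"
  shows "c2 \<le> a \<or> c3 \<le> b \<or> (r12 \<le> a \<and> r13 \<le> b)"
proof (cases "c2 \<le> a \<or> c3 \<le> b")
  case False
  then have small: "a < c2" "b < c3" by simp_all
  have "p \<le> a"
    using span_coeff_le[OF eq small(2) gens_pos(2,3) least3] .
  moreover have "q \<le> b"
    using eq span_coeff_le[of k n1 q n3 p n2 b a c2] small(1) gens_pos(2,3) least2
    by (simp add: ac_simps bounds_span_multiples_commute)
  ultimately obtain a' b' where a': "a = p + a'" and b': "b = q + b'"
    by (auto simp: le_iff_add)
  then have eq': "k * n1 = a' * n2 + b' * n3"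
    using eq by (simp add: algebra_simps)
  then obtain k' where k': "k = c1 + k'"
    using bounds_span_multiplesD[OF least1 _ \<open>0 < k\<close>] by (auto simp: le_iff_add)
  then have eq'': "k' * n1 + r12 * n2 + r13 * n3 = a' * n2 + b' * n3"
    using eq' rel1 by (simp add: algebra_simps)
  have "b' < c3" "a' < c2"
    using small a' b' by simp_all
  have "r12 \<le> a'"
    using span_coeff_le[OF eq'' \<open>b' < c3\<close> gens_pos(2,3) least3] .
  moreover have "r13 \<le> b'"
    using eq'' span_coeff_le[of k' n1 r13 n3 r12 n2 b' a' c2] \<open>a' < c2\<close> gens_pos(2,3) least2
    by (simp add: ac_simps bounds_span_multiples_commute)
  ultimately show ?thesis
    using a' b' by simp
qed auto

lemma c3_le_r23_if_r21_eq_0: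
  assumes "r21 = 0"
  shows "c3 \<le> r23"
proof (rule bounds_span_multiplesD[OF least3])
  show "r23 * n3 = 0 * n1 + c2 * n2"
    using rel2 assms by simp
  show "0 < r23"
    using rel2 assms c_pos(2) gens_pos(2) by (metis add_0 mult_0 mult_is_0 neq0_conv)
qed

lemma two_nonzero_neighbour:
  assumes v: "v \<in> Z n1 n2 n3 x" and w: "w \<in> Z n1 n2 n3 x" and "fdot v w = 0"
    and x: "x \<notin> {0, c1 * n1, c2 * n2, c3 * n3}"
  obtains u where "u \<in> Z n1 n2 n3 x" "fdot v u \<noteq> 0" "two_nonzero u"
proof -
  obtain a1 a2 a3 b1 b2 b3 where vw: "v = (a1, a2, a3)" "w = (b1, b2, b3)"
    by (cases v; cases w)
  have va: "a1 * n1 + a2 * n2 + a3 * n3 = x" and wb: "b1 * n1 + b2 * n2 + b3 * n3 = x"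
    using v w vw by simp_all
  have orth: "a1 * b1 = 0" "a2 * b2 = 0" "a3 * b3 = 0"
    using \<open>fdot v w = 0\<close> vw by simp_all
  consider "two_nonzero v" | "0 < a1" "a2 = 0" "a3 = 0" | "0 < a2" "a1 = 0" "a3 = 0"
    | "0 < a3" "a1 = 0" "a2 = 0"
    using va x unfolding vw two_nonzero_def
    by (cases "a1 = 0"; cases "a2 = 0"; cases "a3 = 0") auto
  then show ?thesis
  proof cases
    case 1
    then show ?thesis
      using that v fdot_ne_0_if_two_nonzero by blast
  next
    case 2
    then have "a1 * n1 = b2 * n2 + b3 * n3"
      using va wb orth by simp
    note split = multiple_exceeding_relation[OF this \<open>0 < a1\<close> _ gens_pos(1) c_pos(1) rel1 least1]
    show ?thesis
    proof (rule that[of "(a1 - c1, r12, r13)"])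
      show "(a1 - c1, r12, r13) \<in> Z n1 n2 n3 x" "two_nonzero (a1 - c1, r12, r13)"
        "fdot v (a1 - c1, r12, r13) \<noteq> 0"
        using split va x 2 vw by (auto simp: two_nonzero_def)
    qed
  next
    case 3
    then have "a2 * n2 = b1 * n1 + b3 * n3"
      using va wb orth by simp
    note split = multiple_exceeding_relation[OF this \<open>0 < a2\<close> _ gens_pos(2) c_pos(2) rel2 least2]
    show ?thesis
    proof (rule that[of "(r21, a2 - c2, r23)"])
      show "(r21, a2 - c2, r23) \<in> Z n1 n2 n3 x" "two_nonzero (r21, a2 - c2, r23)"
        "fdot v (r21, a2 - c2, r23) \<noteq> 0"
        using split va x 3 vw by (auto simp: two_nonzero_def algebra_simps)
    qed
  next
    case 4
    then have "a3 * n3 = b1 * n1 + b2 * n2"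
      using va wb orth by simp
    note split = multiple_exceeding_relation[OF this \<open>0 < a3\<close> _ gens_pos(3) c_pos(3) rel3 least3]
    show ?thesis
    proof (rule that[of "(r31, r32, a3 - c3)"])
      show "(r31, r32, a3 - c3) \<in> Z n1 n2 n3 x" "two_nonzero (r31, r32, a3 - c3)"
        "fdot v (r31, r32, a3 - c3) \<noteq> 0"
        using split va x 4 vw by (auto simp: two_nonzero_def algebra_simps)
    qed
  qed
qed

lemma betti_subset: "{x. betti n1 n2 n3 x} \<subseteq> {c1 * n1, c2 * n2, c3 * n3}"
proof
  fix x
  assume "x \<in> {x. betti n1 n2 n3 x}"
  then obtain v w where v: "v \<in> Z n1 n2 n3 x" and w: "w \<in> Z n1 n2 n3 x"
    and disconnected: "\<not> (nabla_edge n1 n2 n3 x)\<^sup>*\<^sup>* v w"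
    by (auto simp: betti_def)
  show "x \<in> {c1 * n1, c2 * n2, c3 * n3}"
  proof (rule ccontr)
    assume "x \<notin> {c1 * n1, c2 * n2, c3 * n3}"
    moreover have "x \<noteq> 0"
    proof
      assume "x = 0"
      then have "v = (0, 0, 0)" "w = (0, 0, 0)"
        using v w gens_pos by (cases v; cases w; simp)+
      with disconnected show False by simp
    qed
    ultimately have x: "x \<notin> {0, c1 * n1, c2 * n2, c3 * n3}" by simp
    txt \<open>Factorizations with two nonzero entries are pairwise adjacent, and both v and w
      have such a neighbour.\<close>
    have "fdot v w = 0"
      using nabla_reach_if_fdot[OF v w] disconnected by blast
    then obtain u where u: "u \<in> Z n1 n2 n3 x" "fdot v u \<noteq> 0" "two_nonzero u"
      using two_nonzero_neighbour[OF v w _ x] by blast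
    from \<open>fdot v w = 0\<close> have "fdot w v = 0"
      by (simp add: fdot_commute)
    then obtain u' where u': "u' \<in> Z n1 n2 n3 x" "fdot w u' \<noteq> 0" "two_nonzero u'"
      using two_nonzero_neighbour[OF w v _ x] by blast
    have "(nabla_edge n1 n2 n3 x)\<^sup>*\<^sup>* v u" "(nabla_edge n1 n2 n3 x)\<^sup>*\<^sup>* u u'"
      "(nabla_edge n1 n2 n3 x)\<^sup>*\<^sup>* u' w"
      using u u' v w fdot_ne_0_if_two_nonzero fdot_commute by (metis nabla_reach_if_fdot)+
    with disconnected show False
      by (meson rtranclp_trans)
  qed
qed

lemma distinct_if_three_betti:
  assumes "card {x. betti n1 n2 n3 x} = 3"
  shows "c1 * n1 \<noteq> c2 * n2" "c1 * n1 \<noteq> c3 * n3" "c2 * n2 \<noteq> c3 * n3"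
proof -
  have "3 \<le> card {c1 * n1, c2 * n2, c3 * n3}"
    using card_mono[OF _ betti_subset] assms by simp
  then show "c1 * n1 \<noteq> c2 * n2" "c1 * n1 \<noteq> c3 * n3" "c2 * n2 \<noteq> c3 * n3"
    by (auto simp: card_insert_if split: if_splits)
qed

end

lemma two_generator_coeffs_unique:
  assumes eq: "p * x + s * z = r * x + t * z" and "r < cx" "t < cz" "0 < x" "0 < z"
    and least_x: "bounds_span_multiples cx x y z" and least_z: "bounds_span_multiples cz z x y"
  shows "p = r" "s = t"
proof -
  have False if "p < r"
  proof -
    obtain d where d: "r = p + d" "0 < d"
      using \<open>p < r\<close> less_imp_add_positive by blast
    then have s_eq: "s * z = d * x + t * z"
      using eq by (simp add: algebra_simps)
    then have "t \<le> s"
      using \<open>0 < z\<close> by (metis le_add2 mult_le_cancel2 not_gr0)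
    then obtain e where "s = t + e"
      using le_iff_add by blast
    then have "d * x = 0 * y + e * z"
      using s_eq by (simp add: algebra_simps)
    then have "cx \<le> d"
      using bounds_span_multiplesD[OF least_x] \<open>0 < d\<close> by blast
    with d \<open>r < cx\<close> show False by simp
  qed
  moreover have False if "r < p"
  proof -
    obtain d where d: "p = r + d" "0 < d"
      using \<open>r < p\<close> less_imp_add_positive by blast
    then have t_eq: "d * x + s * z = t * z"
      using eq by (simp add: algebra_simps)
    then have "s \<le> t"
      using \<open>0 < z\<close> by (metis le_add2 mult_le_cancel2 not_gr0)
    then obtain e where "t = s + e"
      using le_iff_add by blast
    moreover have "e * z = d * x + 0 * y"
      using t_eq calculation by (simp add: algebra_simps)
    moreover have "0 < e"
      using calculation \<open>0 < d\<close> \<open>0 < x\<close> by (cases "e = 0") simp_all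
    ultimately have "cz \<le> e"
      using bounds_span_multiplesD[OF least_z] by blast
    with \<open>t = s + e\<close> \<open>t < cz\<close> show False by simp
  qed
  ultimately show "p = r"
    using linorder_neqE_nat by blast
  then show "s = t"
    using eq \<open>0 < z\<close> by simp
qed

locale distinct_relations = minimal_relations +
  assumes distinct: "c1 * n1 \<noteq> c2 * n2" "c1 * n1 \<noteq> c3 * n3" "c2 * n2 \<noteq> c3 * n3"
begin

lemma distinct_relations_permute:
  "distinct_relations n2 n3 n1 c2 c3 c1 r23 r21 r32 r31 r12 r13"
  "distinct_relations n3 n1 n2 c3 c1 c2 r31 r32 r13 r12 r23 r21"
  "distinct_relations n3 n2 n1 c3 c2 c1 r32 r31 r23 r21 r13 r12"
  "distinct_relations n2 n1 n3 c2 c1 c3 r21 r23 r12 r13 r32 r31"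
  "distinct_relations n1 n3 n2 c1 c3 c2 r13 r12 r31 r32 r21 r23"
  using gens_pos c_pos rel1 rel2 rel3 least1 least2 least3 distinct
  by (unfold_locales; simp add: ac_simps bounds_span_multiples_commute)+

lemma r21_eq_0_if_c2_le_r12:
  assumes "c2 \<le> r12"
  shows "r21 = 0"
proof -
  obtain d where d: "r12 = c2 + d"
    using assms le_iff_add by blast
  then have eq: "c1 * n1 = r21 * n1 + d * n2 + (r13 + r23) * n3"
    using rel1 rel2 by (simp add: algebra_simps)
  then have "r21 * n1 \<le> c1 * n1" by linarith
  then have "r21 \<le> c1"
    using gens_pos(1) by simp
  then obtain e where e: "c1 = r21 + e"
    by (auto simp: le_iff_add)
  then have e_eq: "e * n1 = d * n2 + (r13 + r23) * n3"
    using eq by (simp add: algebra_simps)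
  show ?thesis
  proof (cases "e = 0")
    case True
    then have "d = 0" "r13 = 0"
      using e_eq gens_pos by simp_all
    then have "c1 * n1 = c2 * n2"
      using rel1 d by simp
    with distinct(1) show ?thesis by simp
  next
    case False
    then have "c1 \<le> e"
      using bounds_span_multiplesD[OF least1 e_eq] by simp
    with e show ?thesis by simp
  qed
qed

text \<open>If c_2 \<le> r_12, the implications c_j \<le> r_ij \<Longrightarrow> r_ji = 0 \<Longrightarrow> c_k \<le> r_jk propagate
  round the cycle 1, 2, 3 and give c_1 n_1 \<ge> c_2 n_2 \<ge> c_3 n_3 \<ge> c_1 n_1.\<close>

lemma r12_lt_c2: "r12 < c2"
proof (rule ccontr)
  interpret rot: distinct_relations n2 n3 n1 c2 c3 c1 r23 r21 r32 r31 r12 r13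
    by (fact distinct_relations_permute(1))
  interpret rot2: distinct_relations n3 n1 n2 c3 c1 c2 r31 r32 r13 r12 r23 r21
    by (fact distinct_relations_permute(2))
  assume "\<not> r12 < c2"
  then have "c2 \<le> r12" by simp
  then have "r21 = 0" "c3 \<le> r23"
    using r21_eq_0_if_c2_le_r12 c3_le_r23_if_r21_eq_0 by blast+
  then have "r32 = 0" "c1 \<le> r31"
    using rot.r21_eq_0_if_c2_le_r12 rot.c3_le_r23_if_r21_eq_0 by blast+
  then have "r13 = 0"
    using rot2.r21_eq_0_if_c2_le_r12 by blast
  have "c2 * n2 \<le> c1 * n1"
    using rel1 \<open>r13 = 0\<close> \<open>c2 \<le> r12\<close> by simp
  moreover have "c3 * n3 \<le> c2 * n2"
    using rel2 \<open>r21 = 0\<close> \<open>c3 \<le> r23\<close> by simp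
  moreover have "c1 * n1 \<le> c3 * n3"
    using rel3 \<open>r32 = 0\<close> \<open>c1 \<le> r31\<close> by simp
  ultimately show False
    using distinct(1) by simp
qed

lemma rel_coeffs_lt: "r12 < c2" "r23 < c3" "r31 < c1" "r32 < c2" "r21 < c1" "r13 < c3"
  using r12_lt_c2 distinct_relations_permute[THEN distinct_relations.r12_lt_c2] by auto

lemma r21_pos: "0 < r21"
  using c3_le_r23_if_r21_eq_0 rel_coeffs_lt(2) by (meson neq0_conv not_le)

lemma rel_coeffs_pos: "0 < r21" "0 < r32" "0 < r13" "0 < r23" "0 < r12" "0 < r31"
  using r21_pos distinct_relations_permute[THEN distinct_relations.r21_pos] by auto

lemma c1_le_r21_r31: "c1 \<le> r21 + r31"
proof -
  obtain d e where d: "c2 = r32 + d" "0 < d" and e: "c3 = r23 + e"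
    using rel_coeffs_lt(4,2) by (metis less_imp_add_positive)
  then have eq: "(r21 + r31) * n1 = d * n2 + e * n3"
    using rel2 rel3 by (simp add: algebra_simps)
  moreover have "0 < r21 + r31"
    using rel_coeffs_pos(1) by simp
  ultimately show ?thesis
    by (rule bounds_span_multiplesD[OF least1])
qed

lemma c_eq_sums: "c1 = r21 + r31" "c2 = r12 + r32" "c3 = r13 + r23"
proof -
  have "c1 * n1 \<le> (r21 + r31) * n1" "c2 * n2 \<le> (r12 + r32) * n2" "c3 * n3 \<le> (r13 + r23) * n3"
    using c1_le_r21_r31 distinct_relations_permute(1,2)[THEN distinct_relations.c1_le_r21_r31]
    by (simp_all add: ac_simps)
  moreover have
    "c1 * n1 + c2 * n2 + c3 * n3 = (r21 + r31) * n1 + (r12 + r32) * n2 + (r13 + r23) * n3"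
    using rel1 rel2 rel3 by (simp add: algebra_simps)
  ultimately have "c1 * n1 = (r21 + r31) * n1" "c2 * n2 = (r12 + r32) * n2"
    "c3 * n3 = (r13 + r23) * n3"
    by linarith+
  then show "c1 = r21 + r31" "c2 = r12 + r32" "c3 = r13 + r23"
    using gens_pos by simp_all
qed

lemma Z_c2n2: "Z n1 n2 n3 (c2 * n2) = {(0, c2, 0), (r21, 0, r23)}"
proof (intro set_eqI iffI)
  fix v
  assume "v \<in> Z n1 n2 n3 (c2 * n2)"
  then obtain p q s where v: "v = (p, q, s)" and eq: "p * n1 + q * n2 + s * n3 = c2 * n2"
    by (cases v) auto
  then have "q * n2 \<le> c2 * n2" by linarith
  then have "q \<le> c2"
    using gens_pos(2) by simp
  then obtain t where t: "c2 = q + t"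
    by (auto simp: le_iff_add)
  then have t_eq: "t * n2 = p * n1 + s * n3"
    using eq by (simp add: algebra_simps)
  show "v \<in> {(0, c2, 0), (r21, 0, r23)}"
  proof (cases "t = 0")
    case True
    then show ?thesis
      using t t_eq v gens_pos by simp
  next
    case False
    then have "c2 \<le> t"
      using bounds_span_multiplesD[OF least2 t_eq] by simp
    then have "q = 0"
      using t by simp
    then have "p * n1 + s * n3 = r21 * n1 + r23 * n3"
      using eq rel2 by simp
    then have "p = r21" "s = r23"
      using two_generator_coeffs_unique[OF _ rel_coeffs_lt(5,2) gens_pos(1,3) least1 least3] by blast+
    then show ?thesis
      using v \<open>q = 0\<close> by simp
  qed
qed (auto simp: rel2)

end

locale ordered_relations = distinct_relations +
  assumes gens_order: "n1 < n2" "n2 < n3"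
begin

lemma r12_r13_le_c1: "r12 + r13 \<le> c1"
proof -
  have "(r12 + r13) * n1 \<le> r12 * n2 + r13 * n3"
    using gens_order by (simp add: add_mult_distrib add_mono)
  then have "(r12 + r13) * n1 \<le> c1 * n1"
    using rel1 by simp
  then show ?thesis
    using gens_pos(1) by simp
qed

lemma c3_le_r31_r32: "c3 \<le> r31 + r32"
proof -
  have "r31 * n1 + r32 * n2 \<le> (r31 + r32) * n3"
    using gens_order by (simp add: add_mult_distrib add_mono)
  then have "c3 * n3 \<le> (r31 + r32) * n3"
    using rel3 by simp
  then show ?thesis
    using gens_pos(3) by simp
qed

lemma exchange_into_n1:
  assumes "c2 \<le> r21 + r23" and x: "x \<in> gen_monoid n1 n2 n3"
    and eq: "a2 * n2 + a3 * n3 = x + n1"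
  obtains w where "w \<in> Z n1 n2 n3 x" "a2 + a3 \<le> flen w + 1"
proof -
  obtain w1 w2 w3 where "w1 * n1 + w2 * n2 + w3 * n3 = x"
    using x by (rule gen_monoidE)
  then have "(w1 + 1) * n1 + w2 * n2 + w3 * n3 = a2 * n2 + a3 * n3"
    using eq by simp
  then consider "c2 \<le> a2" | "c3 \<le> a3" | "r12 \<le> a2" "r13 \<le> a3"
    using exchange_applies[OF _ zero_less_Suc] by (metis Suc_eq_plus1)
  then show ?thesis
  proof cases
    case 1
    obtain d s where "a2 = c2 + d" "r21 = Suc s"
      using 1 rel_coeffs_pos(1) by (metis le_iff_add gr0_implies_Suc)
    then show ?thesis
      using eq rel2 assms(1)
      by (intro that[of "(s, d, a3 + r23)"]) (simp_all add: algebra_simps)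
  next
    case 2
    obtain d s where "a3 = c3 + d" "r31 = Suc s"
      using 2 rel_coeffs_pos(6) by (metis le_iff_add gr0_implies_Suc)
    then show ?thesis
      using eq rel3 c3_le_r31_r32
      by (intro that[of "(s, a2 + r32, d)"]) (simp_all add: algebra_simps)
  next
    case 3
    obtain d e s where "a2 = r12 + d" "a3 = r13 + e" "c1 = Suc s"
      using 3 c_pos(1) by (metis le_iff_add gr0_implies_Suc)
    then show ?thesis
      using eq rel1 r12_r13_le_c1
      by (intro that[of "(s, d, e)"]) (simp_all add: algebra_simps)
  qed
qed

lemma factorization_with_n1:
  assumes "c2 \<le> r21 + r23" and x: "x \<in> gen_monoid n1 n2 n3"
    and v: "v \<in> Z n1 n2 n3 (x + n1)"
  obtains w where "w \<in> Z n1 n2 n3 x" "flen v \<le> flen w + 1"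
proof -
  obtain a1 a2 a3 where v_eq: "v = (a1, a2, a3)"
    by (cases v)
  with v have eq: "a1 * n1 + a2 * n2 + a3 * n3 = x + n1" by simp
  show ?thesis
  proof (cases a1)
    case 0
    with eq have "a2 * n2 + a3 * n3 = x + n1" by simp
    then obtain w where "w \<in> Z n1 n2 n3 x" "a2 + a3 \<le> flen w + 1"
      by (rule exchange_into_n1[OF assms(1) x])
    with that v_eq 0 show ?thesis by simp
  next
    case (Suc b)
    with eq show ?thesis
      by (intro that[of "(b, a2, a3)"]) (simp_all add: v_eq)
  qed
qed

lemma exchange_into_n3:
  assumes "r21 + r23 \<le> c2" and x: "x \<in> gen_monoid n1 n2 n3"
    and eq: "a1 * n1 + a2 * n2 = x + n3"
  obtains w where "w \<in> Z n1 n2 n3 x" "flen w + 1 \<le> a1 + a2"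
proof -
  interpret rev: distinct_relations n3 n2 n1 c3 c2 c1 r32 r31 r23 r21 r13 r12
    by (fact distinct_relations_permute(3))
  obtain w1 w2 w3 where "w1 * n1 + w2 * n2 + w3 * n3 = x"
    using x by (rule gen_monoidE)
  then have "(w3 + 1) * n3 + w2 * n2 + w1 * n1 = a2 * n2 + a1 * n1"
    using eq by simp
  then consider "c2 \<le> a2" | "c1 \<le> a1" | "r32 \<le> a2" "r31 \<le> a1"
    using rev.exchange_applies[OF _ zero_less_Suc] by (metis Suc_eq_plus1)
  then show ?thesis
  proof cases
    case 1
    obtain d s where "a2 = c2 + d" "r23 = Suc s"
      using 1 rel_coeffs_pos(4) by (metis le_iff_add gr0_implies_Suc)
    then show ?thesis
      using eq rel2 assms(1)
      by (intro that[of "(a1 + r21, d, s)"]) (simp_all add: algebra_simps)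
  next
    case 2
    obtain d s where "a1 = c1 + d" "r13 = Suc s"
      using 2 rel_coeffs_pos(3) by (metis le_iff_add gr0_implies_Suc)
    then show ?thesis
      using eq rel1 r12_r13_le_c1
      by (intro that[of "(d, a2 + r12, s)"]) (simp_all add: algebra_simps)
  next
    case 3
    obtain d e s where "a2 = r32 + d" "a1 = r31 + e" "c3 = Suc s"
      using 3 c_pos(3) by (metis le_iff_add gr0_implies_Suc)
    then show ?thesis
      using eq rel3 c3_le_r31_r32
      by (intro that[of "(e, d, s)"]) (simp_all add: algebra_simps)
  qed
qed

lemma factorization_with_n3:
  assumes "r21 + r23 \<le> c2" and x: "x \<in> gen_monoid n1 n2 n3"
    and v: "v \<in> Z n1 n2 n3 (x + n3)"
  obtains w where "w \<in> Z n1 n2 n3 x" "flen w + 1 \<le> flen v"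
proof -
  obtain a1 a2 a3 where v_eq: "v = (a1, a2, a3)"
    by (cases v)
  with v have eq: "a1 * n1 + a2 * n2 + a3 * n3 = x + n3" by simp
  show ?thesis
  proof (cases a3)
    case 0
    with eq have "a1 * n1 + a2 * n2 = x + n3" by simp
    then obtain w where "w \<in> Z n1 n2 n3 x" "flen w + 1 \<le> a1 + a2"
      by (rule exchange_into_n3[OF assms(1) x])
    with that v_eq 0 show ?thesis by simp
  next
    case (Suc b)
    with eq show ?thesis
      by (intro that[of "(a1, a2, b)"]) (simp_all add: v_eq)
  qed
qed

lemma maxlen_add_n1:
  assumes "c2 \<le> r21 + r23" and x: "x \<in> gen_monoid n1 n2 n3"
  shows "maxlen n1 n2 n3 (x + n1) = maxlen n1 n2 n3 x + 1"
proof (rule antisym)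
  obtain a b c where abc: "(a, b, c) \<in> Z n1 n2 n3 x" "a + b + c = maxlen n1 n2 n3 x"
    using maxlen_attained[OF gens_pos x] by (metis flen_eq prod_cases3)
  have shifted: "(Suc a, b, c) \<in> Z n1 n2 n3 (x + n1)"
    using abc(1) by simp
  show "maxlen n1 n2 n3 x + 1 \<le> maxlen n1 n2 n3 (x + n1)"
    using maxlen_ge[OF gens_pos shifted] abc(2) by simp
  from shifted obtain v
    where "v \<in> Z n1 n2 n3 (x + n1)" "flen v = maxlen n1 n2 n3 (x + n1)"
    using maxlen_attained[OF gens_pos] gen_monoidI by metis
  moreover from this obtain w where "w \<in> Z n1 n2 n3 x" "flen v \<le> flen w + 1"
    using factorization_with_n1[OF assms] by blast
  ultimately show "maxlen n1 n2 n3 (x + n1) \<le> maxlen n1 n2 n3 x + 1"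
    using maxlen_ge[OF gens_pos] by fastforce
qed

lemma minlen_add_n3:
  assumes "r21 + r23 \<le> c2" and x: "x \<in> gen_monoid n1 n2 n3"
  shows "minlen n1 n2 n3 (x + n3) = minlen n1 n2 n3 x + 1"
proof (rule antisym)
  obtain a b c where abc: "(a, b, c) \<in> Z n1 n2 n3 x" "a + b + c = minlen n1 n2 n3 x"
    using minlen_attained[OF gens_pos x] by (metis flen_eq prod_cases3)
  have shifted: "(a, b, Suc c) \<in> Z n1 n2 n3 (x + n3)"
    using abc(1) by simp
  show "minlen n1 n2 n3 (x + n3) \<le> minlen n1 n2 n3 x + 1"
    using minlen_le[OF gens_pos shifted] abc(2) by simp
  from shifted obtain v
    where "v \<in> Z n1 n2 n3 (x + n3)" "flen v = minlen n1 n2 n3 (x + n3)"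
    using minlen_attained[OF gens_pos] gen_monoidI by metis
  moreover from this obtain w where "w \<in> Z n1 n2 n3 x" "flen w + 1 \<le> flen v"
    using factorization_with_n3[OF assms] by blast
  ultimately show "minlen n1 n2 n3 x + 1 \<le> minlen n1 n2 n3 (x + n3)"
    using minlen_le[OF gens_pos] by fastforce
qed

lemma maxlen_add_n1_iff:
  "(\<forall>x \<in> gen_monoid n1 n2 n3. maxlen n1 n2 n3 (x + n1) = maxlen n1 n2 n3 x + 1)
     \<longleftrightarrow> c2 \<le> r21 + r23"
proof
  assume shift: "\<forall>x \<in> gen_monoid n1 n2 n3. maxlen n1 n2 n3 (x + n1) = maxlen n1 n2 n3 x + 1"
  obtain s where s: "r21 = Suc s"
    using rel_coeffs_pos(1) gr0_implies_Suc by blast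
  define x where "x = s * n1 + r23 * n3"
  have x: "x \<in> gen_monoid n1 n2 n3"
    using gen_monoidI[of "(s, 0, r23)"] by (simp add: x_def)
  have x_n1: "x + n1 = c2 * n2"
    using rel2 s by (simp add: x_def algebra_simps)
  obtain a b c where abc: "(a, b, c) \<in> Z n1 n2 n3 x" "a + b + c = maxlen n1 n2 n3 x"
    using maxlen_attained[OF gens_pos x] by (metis flen_eq prod_cases3)
  then have "(Suc a, b, c) \<in> Z n1 n2 n3 (c2 * n2)"
    using x_n1 by simp
  then have "maxlen n1 n2 n3 x + 1 = r21 + r23"
    using abc(2) Z_c2n2 by auto
  moreover have "c2 \<le> maxlen n1 n2 n3 (c2 * n2)"
    using maxlen_ge[OF gens_pos, of "(0, c2, 0)"] Z_c2n2 by simp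
  ultimately show "c2 \<le> r21 + r23"
    using shift x x_n1 by auto
qed (use maxlen_add_n1 in blast)

lemma minlen_add_n3_iff:
  "(\<forall>x \<in> gen_monoid n1 n2 n3. minlen n1 n2 n3 (x + n3) = minlen n1 n2 n3 x + 1)
     \<longleftrightarrow> r21 + r23 \<le> c2"
proof
  assume shift: "\<forall>x \<in> gen_monoid n1 n2 n3. minlen n1 n2 n3 (x + n3) = minlen n1 n2 n3 x + 1"
  obtain s where s: "r23 = Suc s"
    using rel_coeffs_pos(4) gr0_implies_Suc by blast
  define x where "x = r21 * n1 + s * n3"
  have x: "x \<in> gen_monoid n1 n2 n3"
    using gen_monoidI[of "(r21, 0, s)"] by (simp add: x_def)
  have x_n3: "x + n3 = c2 * n2"
    using rel2 s by (simp add: x_def algebra_simps)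
  obtain a b c where abc: "(a, b, c) \<in> Z n1 n2 n3 x" "a + b + c = minlen n1 n2 n3 x"
    using minlen_attained[OF gens_pos x] by (metis flen_eq prod_cases3)
  then have "(a, b, Suc c) \<in> Z n1 n2 n3 (c2 * n2)"
    using x_n3 by simp
  then have "minlen n1 n2 n3 x + 1 = r21 + r23"
    using abc(2) Z_c2n2 by auto
  moreover have "minlen n1 n2 n3 (c2 * n2) \<le> c2"
    using minlen_le[OF gens_pos, of "(0, c2, 0)"] Z_c2n2 by simp
  ultimately show "r21 + r23 \<le> c2"
    using shift x x_n3 by auto
qed (use minlen_add_n3 in blast)

end

theorem mainTheorem7:
  fixes n1 n2 n3 r12 r13 r21 r23 r31 r32 :: nat
  assumes "emb_dim3 n1 n2 n3"
    and "card {x. betti n1 n2 n3 x} = 3"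
    and "cc n1 n2 n3 1 * n1 = r12 * n2 + r13 * n3"
    and "cc n1 n2 n3 2 * n2 = r21 * n1 + r23 * n3"
    and "cc n1 n2 n3 3 * n3 = r31 * n1 + r32 * n2"
  shows "((\<forall>x \<in> gen_monoid n1 n2 n3. maxlen n1 n2 n3 (x + n1) = maxlen n1 n2 n3 x + 1)
            \<longleftrightarrow> r12 + r32 \<le> r21 + r23)
       \<and> ((\<forall>x \<in> gen_monoid n1 n2 n3. minlen n1 n2 n3 (x + n3) = minlen n1 n2 n3 x + 1)
            \<longleftrightarrow> r12 + r32 \<ge> r21 + r23)"
proof -
  have gens: "0 < n1" "n1 < n2" "n2 < n3"
    using assms(1) by (auto simp: emb_dim3_def)
  then have pos: "0 < n1" "0 < n2" "0 < n3"
    by simp_all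
  interpret minimal_relations n1 n2 n3 "cc n1 n2 n3 1" "cc n1 n2 n3 2" "cc n1 n2 n3 3"
    r12 r13 r21 r23 r31 r32
    using pos cc_pos[OF pos] assms(3-5) bounds_span_multiples_cc by unfold_locales auto
  interpret ordered_relations n1 n2 n3 "cc n1 n2 n3 1" "cc n1 n2 n3 2" "cc n1 n2 n3 3"
    r12 r13 r21 r23 r31 r32
    using distinct_if_three_betti[OF assms(2)] gens by unfold_locales auto
  show ?thesis
    using maxlen_add_n1_iff minlen_add_n3_iff c_eq_sums(2) by simp
qed

end
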